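(* Let $\{\epsilon_i\}_{i\in\mathbb{Z}}$ be an i.i.d. sequence of standard normal random variables $\epsilon_i\sim\mathcal{N}(0,1)$, and let $\{En_i\}_{i\in\mathbb{Z}}$ be a sequence of real random variables such that: (A1) $\{En_i\}_{i\in\mathbb{Z}}$ is stationary and ergodic; (A2) $\{En_i\}_{i\in\mathbb{Z}}$ is independent of $\{\epsilon_i\}_{i\in\mathbb{Z}}$; (A3) $\mathbb{E}[\log^{+}|En_i|]<\infty$, where $\log^{+}x=\max\{\log x,0\}$. Then the cloud-model recurrence $$X_{n+1}=\epsilon_{n+1}\,|X_n|+En_{n+1},\qquad n\in\mathbb{Z},$$ admits a unique stationary solution $\{X_n\}_{n\in\mathbb{Z}}$.
   Context: Background: a $p$-order (Gaussian) cloud model with numerical characteristics $En_1,\dots,En_p,He$ ($He>0$) generates a cloud drop via $x_1=En_p+He\cdot\epsilon$, $x_i=En_{p-(i-1)}+|x_{i-1}|\cdot\epsilon$ for $2\le i\le p$, with fresh standard normal $\epsilon$ at each step. Viewing the numerical characteristics as a sequence $\{En_i\}$ and the Gaussian noises as a sequence $\{\epsilon_i\}$, this is the stochastic recurrence $X_{n+1}=\epsilon_{n+1}|X_n|+En_{n+1}$ (the characteristics play the role of the additive terms). A stationary solution is a sequence of real random variables $\{X_n\}_{n\in\mathbb{Z}}$ satisfying the recurrence almost surely for all $n$, whose finite-dimensional distributions are shift-invariant; uniqueness is almost sure. *)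

theory Defs
  imports "HOL-Probability.Probability"
begin

definition log_plus :: "real \<Rightarrow> real" where
  "log_plus x = (if x > 0 then max (ln x) 0 else 0)"

definition stationary_process :: "'a measure \<Rightarrow> (int \<Rightarrow> 'a \<Rightarrow> real) \<Rightarrow> bool" where
  "stationary_process M X \<longleftrightarrow>
     (\<forall>J k. finite J \<longrightarrow>
        distr M (PiM J (\<lambda>_. borel)) (\<lambda>\<omega>. restrict (\<lambda>j. X (j + k) \<omega>) J)
      = distr M (PiM J (\<lambda>_. borel)) (\<lambda>\<omega>. restrict (\<lambda>j. X j \<omega>) J))"

definition ergodic_process :: "'a measure \<Rightarrow> (int \<Rightarrow> 'a \<Rightarrow> real) \<Rightarrow> bool" where
  "ergodic_process M X \<longleftrightarrow>
     (\<forall>A \<in> sets (PiM (UNIV :: int set) (\<lambda>_. borel)).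
        (\<lambda>x i. x (i + 1)) -` A = A \<longrightarrow>
        measure M {\<omega> \<in> space M. (\<lambda>i. X i \<omega>) \<in> A} \<in> {0, 1})"

end

theory Submission
  imports Defs
begin

text \<open>Unrolling the recurrence backwards, the iterate at time n started from 0 at time n - m
  differs from the one started at time n - m - 1 by at most
  |eps(n) ... eps(n-m+1)| |En(n-m)|. Since E|eps| = sqrt(2/pi) < 9/10, Markov's inequality
  and Borel-Cantelli make the product eventually smaller than (9/10)^m, while the log+ moment
  and stationarity make |En(n-m)| eventually smaller than (21/20)^m, so the iterates converge
  almost surely. The limit is a fixed measurable function of the input paths shifted to time n,
  whose joint law is shift invariant, hence the limit process is stationary. Two solutions
  satisfy |Y(n) - X(n)| <= |eps(n) ... eps(n-m+1)| |Y(n-m) - X(n-m)|; the product tends to 0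
  in mean and the second factor is tight by stationarity, so Y(n) = X(n) almost surely.\<close>

section \<open>Backward iteration of the recurrence\<close>

fun backward_iter :: "(int \<Rightarrow> real) \<Rightarrow> (int \<Rightarrow> real) \<Rightarrow> nat \<Rightarrow> int \<Rightarrow> real" where
  "backward_iter e c 0 n = 0"
| "backward_iter e c (Suc m) n = e n * \<bar>backward_iter e c m (n - 1)\<bar> + c n"

definition backward_limit :: "(int \<Rightarrow> real) \<Rightarrow> (int \<Rightarrow> real) \<Rightarrow> int \<Rightarrow> real" where
  "backward_limit e c n = lim (\<lambda>m. backward_iter e c m n)"

lemma backward_iter_shift:
  "backward_iter (\<lambda>i. e (i + k)) (\<lambda>i. c (i + k)) m n = backward_iter e c m (n + k)"
  by (induction m arbitrary: n) (simp_all add: algebra_simps)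

lemma backward_limit_shift:
  "backward_limit (\<lambda>i. e (i + k)) (\<lambda>i. c (i + k)) n = backward_limit e c (n + k)"
  by (simp add: backward_limit_def backward_iter_shift)

lemma backward_iter_increment:
  "\<bar>backward_iter e c (Suc m) n - backward_iter e c m n\<bar>
     \<le> (\<Prod>k<m. \<bar>e (n - int k)\<bar>) * \<bar>c (n - int m)\<bar>"
proof (induction m arbitrary: n)
  case 0
  then show ?case by simp
next
  case (Suc m)
  let ?x = "backward_iter e c"
  have "\<bar>?x (Suc (Suc m)) n - ?x (Suc m) n\<bar> = \<bar>e n\<bar> * \<bar>\<bar>?x (Suc m) (n - 1)\<bar> - \<bar>?x m (n - 1)\<bar>\<bar>"
    by (simp add: abs_mult[symmetric] algebra_simps)
  also have "\<dots> \<le> \<bar>e n\<bar> * \<bar>?x (Suc m) (n - 1) - ?x m (n - 1)\<bar>"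
    by (intro mult_left_mono) auto
  also have "\<dots> \<le> \<bar>e n\<bar> * ((\<Prod>k<m. \<bar>e (n - 1 - int k)\<bar>) * \<bar>c (n - 1 - int m)\<bar>)"
    by (intro mult_left_mono Suc.IH) auto
  also have "\<dots> = (\<Prod>k<Suc m. \<bar>e (n - int k)\<bar>) * \<bar>c (n - int (Suc m))\<bar>"
    by (simp add: prod.lessThan_Suc_shift del: prod.lessThan_Suc) (simp add: algebra_simps)
  finally show ?case .
qed

lemma convergent_backward_iter:
  assumes "summable (\<lambda>m. (\<Prod>k<m. \<bar>e (n - int k)\<bar>) * \<bar>c (n - int m)\<bar>)"
  shows "convergent (\<lambda>m. backward_iter e c m n)"
proof -
  have "summable (\<lambda>m. backward_iter e c (Suc m) n - backward_iter e c m n)"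
    using backward_iter_increment by (intro summable_comparison_test'[OF assms]) simp
  then have "convergent (\<lambda>l. backward_iter e c l n - backward_iter e c 0 n)"
    by (simp only: summable_iff_convergent sum_lessThan_telescope[of "\<lambda>m. backward_iter e c m n"])
  then show ?thesis
    by simp
qed

lemma backward_limit_recurrence:
  assumes "convergent (\<lambda>m. backward_iter e c m (n - 1))"
  shows "backward_limit e c n = e n * \<bar>backward_limit e c (n - 1)\<bar> + c n"
proof -
  have lim: "(\<lambda>m. backward_iter e c m (n - 1)) \<longlonglongrightarrow> backward_limit e c (n - 1)"
    using assms by (simp add: backward_limit_def convergent_LIMSEQ_iff)
  have "(\<lambda>m. backward_iter e c (Suc m) n) \<longlonglongrightarrow> e n * \<bar>backward_limit e c (n - 1)\<bar> + c n"
    by (simp only: backward_iter.simps) (intro tendsto_intros lim)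
  then show ?thesis
    unfolding backward_limit_def by (rule limI[OF LIMSEQ_imp_Suc])
qed

lemma recurrence_solutions_contract:
  fixes x y e c :: "int \<Rightarrow> real"
  assumes y: "\<And>n. y (n + 1) = e (n + 1) * \<bar>y n\<bar> + c (n + 1)"
    and x: "\<And>n. x (n + 1) = e (n + 1) * \<bar>x n\<bar> + c (n + 1)"
  shows "\<bar>y n - x n\<bar> \<le> (\<Prod>k<m. \<bar>e (n - int k)\<bar>) * \<bar>y (n - int m) - x (n - int m)\<bar>"
proof (induction m)
  case 0
  then show ?case by simp
next
  case (Suc m)
  define j where "j = n - int (Suc m)"
  have j: "n - int m = j + 1"
    by (simp add: j_def)
  have "\<bar>y (j + 1) - x (j + 1)\<bar> = \<bar>e (j + 1)\<bar> * \<bar>\<bar>y j\<bar> - \<bar>x j\<bar>\<bar>"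
    by (simp only: y x) (simp add: abs_mult[symmetric] algebra_simps)
  also have "\<dots> \<le> \<bar>e (j + 1)\<bar> * \<bar>y j - x j\<bar>"
    by (intro mult_left_mono abs_triangle_ineq3) simp
  finally have "\<bar>y (n - int m) - x (n - int m)\<bar> \<le> \<bar>e (n - int m)\<bar> * \<bar>y j - x j\<bar>"
    unfolding j .
  then have "(\<Prod>k<m. \<bar>e (n - int k)\<bar>) * \<bar>y (n - int m) - x (n - int m)\<bar>
      \<le> (\<Prod>k<m. \<bar>e (n - int k)\<bar>) * (\<bar>e (n - int m)\<bar> * \<bar>y j - x j\<bar>)"
    by (intro mult_left_mono) (auto intro: prod_nonneg)
  with Suc.IH show ?case
    by (simp add: j_def mult.assoc)
qed

section \<open>Shift invariance of path laws\<close>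

abbreviation real_paths :: "(int \<Rightarrow> real) measure" where
  "real_paths \<equiv> PiM UNIV (\<lambda>_. borel)"

lemma measurable_path_shift: "(\<lambda>f i. f (i + k)) \<in> measurable real_paths real_paths"
  by (rule measurable_PiM_single') auto

lemma measurable_process_path:
  "(\<And>i. W i \<in> borel_measurable M) \<Longrightarrow> (\<lambda>\<omega> i. W i \<omega>) \<in> measurable M real_paths"
  by (rule measurable_PiM_single') auto

lemma measurable_backward_iter [measurable]:
  "(\<lambda>p. backward_iter (snd p) (fst p) m n) \<in> borel_measurable (real_paths \<Otimes>\<^sub>M real_paths)"
proof (induction m arbitrary: n)
  case 0
  then show ?case by simp
next
  case (Suc m)
  note Suc.IH[of "n - 1", measurable]
  show ?case
    by (simp only: backward_iter.simps) measurable
qed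

lemma measurable_backward_limit [measurable]:
  "(\<lambda>p. backward_limit (snd p) (fst p) n) \<in> borel_measurable (real_paths \<Otimes>\<^sub>M real_paths)"
  unfolding backward_limit_def by measurable

lemma (in prob_space) distr_path_eqI:
  assumes W: "\<And>i. W i \<in> borel_measurable M" and V: "\<And>i. V i \<in> borel_measurable M"
    and cylinder: "\<And>J A. finite J \<Longrightarrow> (\<And>j. j \<in> J \<Longrightarrow> A j \<in> sets borel) \<Longrightarrow>
      prob {\<omega> \<in> space M. \<forall>j\<in>J. W j \<omega> \<in> A j} = prob {\<omega> \<in> space M. \<forall>j\<in>J. V j \<omega> \<in> A j}"
  shows "distr M real_paths (\<lambda>\<omega> i. W i \<omega>) = distr M real_paths (\<lambda>\<omega> i. V i \<omega>)"
proof (rule measure_eqI_PiM_infinite)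
  have W_path: "(\<lambda>\<omega> i. W i \<omega>) \<in> measurable M real_paths"
    using W by (rule measurable_process_path)
  have V_path: "(\<lambda>\<omega> i. V i \<omega>) \<in> measurable M real_paths"
    using V by (rule measurable_process_path)
  show "finite_measure (distr M real_paths (\<lambda>\<omega> i. W i \<omega>))"
    using prob_space_distr[OF W_path] by (simp add: prob_space_def)
  fix J :: "int set" and A
  assume J: "finite J" and A: "\<And>j. j \<in> J \<Longrightarrow> A j \<in> sets (borel :: real measure)"
  let ?C = "prod_emb UNIV (\<lambda>_. borel) J (Pi\<^sub>E J A)"
  have C: "?C \<in> sets real_paths"
    using J A by (intro sets_PiM_I) auto
  have "(\<lambda>\<omega> i. U i \<omega>) -` ?C \<inter> space M = {\<omega> \<in> space M. \<forall>j\<in>J. U j \<omega> \<in> A j}"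
    for U :: "int \<Rightarrow> 'a \<Rightarrow> real"
    by (auto simp: prod_emb_def PiE_iff)
  then show "emeasure (distr M real_paths (\<lambda>\<omega> i. W i \<omega>)) ?C
      = emeasure (distr M real_paths (\<lambda>\<omega> i. V i \<omega>)) ?C"
    using cylinder[OF J A] by (simp add: emeasure_distr[OF W_path C] emeasure_distr[OF V_path C]
        emeasure_eq_measure)
qed simp_all

lemma (in prob_space) stationary_process_prob_cylinder:
  assumes "stationary_process M W" and W: "\<And>i. W i \<in> borel_measurable M"
    and J: "finite J" and A: "\<And>j. j \<in> J \<Longrightarrow> A j \<in> sets borel"
  shows "prob {\<omega> \<in> space M. \<forall>j\<in>J. W (j + k) \<omega> \<in> A j} = prob {\<omega> \<in> space M. \<forall>j\<in>J. W j \<omega> \<in> A j}"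
proof -
  have restrict_meas: "(\<lambda>\<omega>. restrict (\<lambda>j. W (j + l) \<omega>) J) \<in> measurable M (PiM J (\<lambda>_. borel))" for l
    using W by (intro measurable_restrict) simp
  have A_sets: "Pi\<^sub>E J A \<in> sets (PiM J (\<lambda>_. borel))"
    using J A by (intro sets_PiM_I_finite) auto
  have prob_eq: "prob {\<omega> \<in> space M. \<forall>j\<in>J. W (j + l) \<omega> \<in> A j}
      = measure (distr M (PiM J (\<lambda>_. borel)) (\<lambda>\<omega>. restrict (\<lambda>j. W (j + l) \<omega>) J)) (Pi\<^sub>E J A)" for l
    by (subst measure_distr[OF restrict_meas A_sets])
      (auto intro!: arg_cong[where f = prob] simp: PiE_iff)
  show ?thesis
    using prob_eq[of k] prob_eq[of 0] assms(1) J unfolding stationary_process_def by simp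
qed

lemma (in prob_space) stationary_process_prob_marginal:
  assumes "stationary_process M W" "\<And>i. W i \<in> borel_measurable M" "A \<in> sets borel"
  shows "prob {\<omega> \<in> space M. W k \<omega> \<in> A} = prob {\<omega> \<in> space M. W 0 \<omega> \<in> A}"
  using stationary_process_prob_cylinder[OF assms(1,2), of "{0}" "\<lambda>_. A" k] assms(3) by simp

lemma (in prob_space) stationary_process_distr_path_shift:
  assumes "stationary_process M W" "\<And>i. W i \<in> borel_measurable M"
  shows "distr M real_paths (\<lambda>\<omega> i. W (i + k) \<omega>) = distr M real_paths (\<lambda>\<omega> i. W i \<omega>)"
  using assms by (intro distr_path_eqI stationary_process_prob_cylinder) auto

lemma (in prob_space) iid_distr_path_shift:
  assumes indep: "indep_vars (\<lambda>_. borel) X UNIV"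
    and ident: "\<And>i. distr M borel (X i) = distr M borel (X 0)"
  shows "distr M real_paths (\<lambda>\<omega> i. X (i + k) \<omega>) = distr M real_paths (\<lambda>\<omega> i. X i \<omega>)"
proof -
  have X: "X i \<in> borel_measurable M" for i
    using indep by (simp add: indep_vars_def)
  have marginal: "prob (X i -` B \<inter> space M) = prob (X j -` B \<inter> space M)"
    if "B \<in> sets borel" for i j B
    using measure_distr[OF X that, of i] measure_distr[OF X that, of j] ident[of i] ident[of j] by simp
  have cylinder: "prob {\<omega> \<in> space M. \<forall>j\<in>J. X (j + k) \<omega> \<in> A j}
      = prob {\<omega> \<in> space M. \<forall>j\<in>J. X j \<omega> \<in> A j}"
    if J: "finite J" and A: "\<And>j. j \<in> J \<Longrightarrow> A j \<in> sets borel" for J A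
  proof (cases "J = {}")
    case False
    have inj: "inj_on (\<lambda>j. j + k) J"
      by (auto simp: inj_on_def)
    have "prob {\<omega> \<in> space M. \<forall>j\<in>J. X (j + k) \<omega> \<in> A j}
        = prob (\<Inter>i\<in>(\<lambda>j. j + k) ` J. X i -` A (i - k) \<inter> space M)"
      using False by (intro arg_cong[where f = prob]) auto
    also have "\<dots> = (\<Prod>i\<in>(\<lambda>j. j + k) ` J. prob (X i -` A (i - k) \<inter> space M))"
      using False J A by (intro indep_varsD[OF indep]) auto
    also have "\<dots> = (\<Prod>j\<in>J. prob (X (j + k) -` A j \<inter> space M))"
      by (simp add: prod.reindex[OF inj])
    also have "\<dots> = (\<Prod>j\<in>J. prob (X j -` A j \<inter> space M))"
      using A by (intro prod.cong refl marginal) auto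
    also have "\<dots> = prob (\<Inter>j\<in>J. X j -` A j \<inter> space M)"
      using False J A by (intro indep_varsD[OF indep, symmetric]) auto
    also have "\<dots> = prob {\<omega> \<in> space M. \<forall>j\<in>J. X j \<omega> \<in> A j}"
      using False by (intro arg_cong[where f = prob]) auto
    finally show ?thesis .
  qed simp
  show ?thesis
    by (rule distr_path_eqI[OF X X cylinder])
qed

lemma (in prob_space) indep_distr_pair_path_shift:
  assumes indep: "indep_var real_paths (\<lambda>\<omega> i. W i \<omega>) real_paths (\<lambda>\<omega> i. V i \<omega>)"
    and W: "distr M real_paths (\<lambda>\<omega> i. W (i + k) \<omega>) = distr M real_paths (\<lambda>\<omega> i. W i \<omega>)"
    and V: "distr M real_paths (\<lambda>\<omega> i. V (i + k) \<omega>) = distr M real_paths (\<lambda>\<omega> i. V i \<omega>)"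
  shows "distr M (real_paths \<Otimes>\<^sub>M real_paths) (\<lambda>\<omega>. (\<lambda>i. W (i + k) \<omega>, \<lambda>i. V (i + k) \<omega>))
       = distr M (real_paths \<Otimes>\<^sub>M real_paths) (\<lambda>\<omega>. (\<lambda>i. W i \<omega>, \<lambda>i. V i \<omega>))"
proof -
  have "indep_var real_paths (\<lambda>\<omega> i. W (i + k) \<omega>) real_paths (\<lambda>\<omega> i. V (i + k) \<omega>)"
    using indep_var_compose[OF indep measurable_path_shift measurable_path_shift]
    by (simp add: comp_def)
  then show ?thesis
    using indep by (simp add: indep_var_distribution_eq W V)
qed

lemma (in prob_space) stationary_process_backward_limit:
  assumes W: "\<And>i. W i \<in> borel_measurable M" and V: "\<And>i. V i \<in> borel_measurable M"
    and shift: "\<And>k. distr M (real_paths \<Otimes>\<^sub>M real_paths) (\<lambda>\<omega>. (\<lambda>i. W (i + k) \<omega>, \<lambda>i. V (i + k) \<omega>))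
       = distr M (real_paths \<Otimes>\<^sub>M real_paths) (\<lambda>\<omega>. (\<lambda>i. W i \<omega>, \<lambda>i. V i \<omega>))"
  shows "stationary_process M (\<lambda>n \<omega>. backward_limit (\<lambda>i. V i \<omega>) (\<lambda>i. W i \<omega>) n)"
  unfolding stationary_process_def
proof (intro allI impI)
  fix J :: "int set" and k :: int
  define F where "F p = restrict (\<lambda>j. backward_limit (snd p) (fst p) j) J" for p
  have F: "F \<in> measurable (real_paths \<Otimes>\<^sub>M real_paths) (PiM J (\<lambda>_. borel))"
    unfolding F_def by measurable
  have path_pair: "(\<lambda>\<omega>. (\<lambda>i. W (i + l) \<omega>, \<lambda>i. V (i + l) \<omega>))
      \<in> measurable M (real_paths \<Otimes>\<^sub>M real_paths)" for l
    using W V by (intro measurable_Pair measurable_process_path)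
  have "distr M (PiM J (\<lambda>_. borel)) (\<lambda>\<omega>. F (\<lambda>i. W (i + l) \<omega>, \<lambda>i. V (i + l) \<omega>))
      = distr (distr M (real_paths \<Otimes>\<^sub>M real_paths) (\<lambda>\<omega>. (\<lambda>i. W (i + l) \<omega>, \<lambda>i. V (i + l) \<omega>)))
          (PiM J (\<lambda>_. borel)) F" for l
    using distr_distr[OF F path_pair] by (simp add: comp_def)
  from this[of k] this[of 0] show "distr M (PiM J (\<lambda>_. borel))
        (\<lambda>\<omega>. restrict (\<lambda>j. backward_limit (\<lambda>i. V i \<omega>) (\<lambda>i. W i \<omega>) (j + k)) J)
      = distr M (PiM J (\<lambda>_. borel)) (\<lambda>\<omega>. restrict (\<lambda>j. backward_limit (\<lambda>i. V i \<omega>) (\<lambda>i. W i \<omega>) j) J)"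
    by (simp add: F_def shift backward_limit_shift[symmetric])
qed

section \<open>Almost sure growth bounds\<close>

lemma sqrt_2_div_pi_less: "sqrt (2 / pi) < 9 / 10"
proof -
  have "2 / pi < (9 / 10) ^ 2"
    using pi_gt3 by (simp add: field_simps)
  then show ?thesis
    by (simp add: real_sqrt_less_iff[symmetric, of _ "(9 / 10) ^ 2"])
qed

lemma (in prob_space) std_normal_abs_moment:
  assumes X: "distributed M lborel X (\<lambda>x. ennreal (std_normal_density x))"
  shows "integrable M (\<lambda>\<omega>. \<bar>X \<omega>\<bar>)" and "(\<integral>\<omega>. \<bar>X \<omega>\<bar> \<partial>M) = sqrt (2 / pi)"
proof -
  have moment: "has_bochner_integral lborel (\<lambda>x. std_normal_density x * \<bar>x\<bar>) (sqrt (2 / pi))"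
    using std_normal_moment_abs_odd[of 0] by simp
  then show "integrable M (\<lambda>\<omega>. \<bar>X \<omega>\<bar>)"
    using distributed_integrable[OF X, of abs] by (simp add: has_bochner_integral_iff)
  have "(\<integral>x. std_normal_density x * \<bar>x\<bar> \<partial>lborel) = (\<integral>\<omega>. \<bar>X \<omega>\<bar> \<partial>M)"
    by (rule distributed_integral[OF X]) auto
  with moment show "(\<integral>\<omega>. \<bar>X \<omega>\<bar> \<partial>M) = sqrt (2 / pi)"
    by (simp add: has_bochner_integral_integral_eq)
qed

lemma (in prob_space) indep_vars_prod_abs:
  fixes X :: "'i \<Rightarrow> 'a \<Rightarrow> real"
  assumes indep: "indep_vars (\<lambda>_. borel) X I" and "finite I"
    and int: "\<And>i. i \<in> I \<Longrightarrow> integrable M (\<lambda>\<omega>. \<bar>X i \<omega>\<bar>)"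
    and mean: "\<And>i. i \<in> I \<Longrightarrow> (\<integral>\<omega>. \<bar>X i \<omega>\<bar> \<partial>M) = \<mu>"
  shows "integrable M (\<lambda>\<omega>. \<Prod>i\<in>I. \<bar>X i \<omega>\<bar>)" and "(\<integral>\<omega>. (\<Prod>i\<in>I. \<bar>X i \<omega>\<bar>) \<partial>M) = \<mu> ^ card I"
proof -
  have abs_indep: "indep_vars (\<lambda>_. borel) (\<lambda>i \<omega>. \<bar>X i \<omega>\<bar>) I"
    by (rule indep_vars_compose2[OF indep]) measurable
  show "integrable M (\<lambda>\<omega>. \<Prod>i\<in>I. \<bar>X i \<omega>\<bar>)"
    using indep_vars_integrable[OF \<open>finite I\<close> abs_indep] int by simp
  show "(\<integral>\<omega>. (\<Prod>i\<in>I. \<bar>X i \<omega>\<bar>) \<partial>M) = \<mu> ^ card I"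
    using indep_vars_lebesgue_integral[OF \<open>finite I\<close> abs_indep] int mean by simp
qed

lemma (in prob_space) AE_eventually_less_power:
  fixes f :: "nat \<Rightarrow> 'a \<Rightarrow> real"
  assumes int: "\<And>m. integrable M (f m)" and nonneg: "\<And>m \<omega>. 0 \<le> f m \<omega>"
    and mean: "\<And>m. (\<integral>\<omega>. f m \<omega> \<partial>M) \<le> c ^ m" and c: "0 \<le> c" "c < r"
  shows "AE \<omega> in M. eventually (\<lambda>m. f m \<omega> < r ^ m) sequentially"
proof -
  define A where "A m = {\<omega> \<in> space M. r ^ m \<le> f m \<omega>}" for m
  have [measurable]: "f m \<in> borel_measurable M" for m
    using int by (rule borel_measurable_integrable)
  have A_sets: "A m \<in> sets M" for m
    unfolding A_def by measurable
  have bound: "prob (A m) \<le> (c / r) ^ m" for m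
  proof -
    have "prob (A m) \<le> (\<integral>\<omega>. f m \<omega> \<partial>M) / r ^ m"
      unfolding A_def using c
      by (intro integral_Markov_inequality_measure[OF int A_sets]) (simp_all add: nonneg)
    also have "\<dots> \<le> c ^ m / r ^ m"
      using mean[of m] c by (intro divide_right_mono) simp_all
    finally show ?thesis
      by (simp add: power_divide)
  qed
  have "summable (\<lambda>m. (c / r) ^ m)"
    using c by (intro summable_geometric) simp
  then have "summable (\<lambda>m. prob (A m))"
    by (rule summable_comparison_test'[where N = 0]) (simp add: bound)
  then have "AE \<omega> in M. eventually (\<lambda>m. \<omega> \<in> space M - A m) sequentially"
    using A_sets by (intro borel_cantelli_AE1) (simp_all add: emeasure_eq_measure)
  then show ?thesis
    by (rule eventually_mono) (auto elim!: eventually_mono simp: A_def not_le)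
qed

lemma suminf_indicator_mult_le:
  assumes "0 < a" "0 \<le> L"
  shows "(\<Sum>m. indicator {m. real m * a \<le> L} m :: ennreal) \<le> ennreal (L / a + 1)"
proof -
  define N where "N = nat \<lfloor>L / a\<rfloor>"
  have N: "real N \<le> L / a" "L / a < real N + 1"
    using assms by (auto simp: N_def)
  have "{m. real m * a \<le> L} = {..N}"
    using N assms by (auto simp: pos_le_divide_eq[symmetric] le_nat_iff le_floor_iff N_def)
  then have "(\<Sum>m. indicator {m. real m * a \<le> L} m :: ennreal) = (\<Sum>m\<in>{..N}. indicator {..N} m)"
    by (simp only:) (rule suminf_finite; simp)
  also have "\<dots> = of_nat (Suc N)"
    by simp
  also have "\<dots> \<le> ennreal (L / a + 1)"
    using N by (simp add: ennreal_of_nat_eq_real_of_nat ennreal_leI)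
  finally show ?thesis .
qed

lemma (in prob_space) summable_prob_ge_mult:
  assumes L [measurable]: "L \<in> borel_measurable M" and nonneg: "\<And>\<omega>. 0 \<le> L \<omega>"
    and finite: "(\<integral>\<^sup>+\<omega>. ennreal (L \<omega>) \<partial>M) < \<infinity>" and "0 < a"
  shows "summable (\<lambda>m. prob {\<omega> \<in> space M. real m * a \<le> L \<omega>})"
proof (rule summable_suminf_not_top)
  let ?C = "\<lambda>m. {\<omega> \<in> space M. real m * a \<le> L \<omega>}"
  have "(\<Sum>m. ennreal (prob (?C m))) = (\<Sum>m. \<integral>\<^sup>+\<omega>. indicator (?C m) \<omega> \<partial>M)"
    by (simp add: emeasure_eq_measure[symmetric])
  also have "\<dots> = (\<integral>\<^sup>+\<omega>. (\<Sum>m. indicator (?C m) \<omega>) \<partial>M)"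
    by (rule nn_integral_suminf[symmetric]) simp
  also have "\<dots> \<le> (\<integral>\<^sup>+\<omega>. ennreal (L \<omega>) * ennreal (1 / a) + 1 \<partial>M)"
  proof (rule nn_integral_mono)
    fix \<omega> assume "\<omega> \<in> space M"
    then have "(\<Sum>m. indicator (?C m) \<omega>) = (\<Sum>m. indicator {m. real m * a \<le> L \<omega>} m :: ennreal)"
      by (simp add: indicator_def)
    also have "\<dots> \<le> ennreal (L \<omega> / a + 1)"
      using \<open>0 < a\<close> nonneg by (rule suminf_indicator_mult_le)
    also have "\<dots> = ennreal (L \<omega>) * ennreal (1 / a) + 1"
      using \<open>0 < a\<close> nonneg[of \<omega>] by (simp add: ennreal_plus[symmetric] ennreal_mult[symmetric])
    finally show "(\<Sum>m. indicator (?C m) \<omega>) \<le> ennreal (L \<omega>) * ennreal (1 / a) + 1" .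
  qed
  also have "\<dots> = (\<integral>\<^sup>+\<omega>. ennreal (L \<omega>) \<partial>M) * ennreal (1 / a) + 1"
    by (simp add: nn_integral_add nn_integral_multc emeasure_space_1)
  also have "\<dots> < \<top>"
    using finite by (simp add: ennreal_mult_less_top)
  finally show "(\<Sum>m. ennreal (prob (?C m))) \<noteq> \<top>"
    by simp
qed simp

lemma mult_ln_le_log_plus:
  assumes "0 < r" "r ^ m \<le> x"
  shows "real m * ln r \<le> log_plus x"
proof -
  have "0 < r ^ m"
    using \<open>0 < r\<close> by simp
  with assms(2) have "0 < x"
    by linarith
  have "real m * ln r = ln (r ^ m)"
    using \<open>0 < r\<close> by (simp add: ln_realpow)
  also have "\<dots> \<le> ln x"
    using \<open>0 < r ^ m\<close> \<open>0 < x\<close> assms(2) by simp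
  finally show ?thesis
    using \<open>0 < x\<close> by (simp add: log_plus_def)
qed

lemma (in prob_space) stationary_process_AE_eventually_less_power:
  assumes W: "stationary_process M W" "\<And>i. W i \<in> borel_measurable M"
    and log_moment: "(\<integral>\<^sup>+\<omega>. ennreal (log_plus \<bar>W 0 \<omega>\<bar>) \<partial>M) < \<infinity>" and "1 < r"
  shows "AE \<omega> in M. eventually (\<lambda>m. \<bar>W (n - int m) \<omega>\<bar> < r ^ m) sequentially"
proof -
  note [measurable] = W(2)
  define L where "L \<omega> = log_plus \<bar>W 0 \<omega>\<bar>" for \<omega>
  have L_meas [measurable]: "L \<in> borel_measurable M"
    unfolding L_def log_plus_def by measurable
  define B where "B m = {\<omega> \<in> space M. r ^ m \<le> \<bar>W (n - int m) \<omega>\<bar>}" for m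
  have B_sets: "B m \<in> sets M" for m
    unfolding B_def by measurable
  have bound: "prob (B m) \<le> prob {\<omega> \<in> space M. real m * ln r \<le> L \<omega>}" for m
  proof -
    have "prob (B m) = prob {\<omega> \<in> space M. W 0 \<omega> \<in> {x. r ^ m \<le> \<bar>x\<bar>}}"
      unfolding B_def using stationary_process_prob_marginal[OF W, of "{x. r ^ m \<le> \<bar>x\<bar>}"] by simp
    also have "\<dots> \<le> prob {\<omega> \<in> space M. real m * ln r \<le> L \<omega>}"
      by (rule finite_measure_mono)
        (use mult_ln_le_log_plus[of r m] \<open>1 < r\<close> in \<open>fastforce simp: L_def\<close>, measurable)
    finally show ?thesis .
  qed
  have "summable (\<lambda>m. prob {\<omega> \<in> space M. real m * ln r \<le> L \<omega>})"
    using log_moment \<open>1 < r\<close> by (intro summable_prob_ge_mult) (simp_all add: L_def log_plus_def)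
  then have "summable (\<lambda>m. prob (B m))"
    by (rule summable_comparison_test'[where N = 0]) (simp add: bound)
  then have "AE \<omega> in M. eventually (\<lambda>m. \<omega> \<in> space M - B m) sequentially"
    using B_sets by (intro borel_cantelli_AE1) (simp_all add: emeasure_eq_measure)
  then show ?thesis
    by (rule eventually_mono) (auto elim!: eventually_mono simp: B_def not_le)
qed

section \<open>Uniqueness of stationary solutions\<close>

lemma (in prob_space) tendsto_prob_tail:
  fixes V :: "'a \<Rightarrow> real"
  assumes [measurable]: "V \<in> borel_measurable M"
  shows "(\<lambda>N. prob {\<omega> \<in> space M. real N < V \<omega>}) \<longlonglongrightarrow> 0"
proof -
  have "(\<lambda>N. prob {\<omega> \<in> space M. real N < V \<omega>}) \<longlonglongrightarrow> prob (\<Inter>N. {\<omega> \<in> space M. real N < V \<omega>})"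
    by (rule Lim_measure_decseq) (auto simp: decseq_def)
  also have "(\<Inter>N. {\<omega> \<in> space M. real N < V \<omega>}) = {}"
  proof -
    have "\<omega> \<notin> (\<Inter>N. {\<omega> \<in> space M. real N < V \<omega>})" for \<omega>
    proof -
      obtain N :: nat where "V \<omega> \<le> real N"
        using real_arch_simple by blast
      then have "\<not> real N < V \<omega>"
        by simp
      then show ?thesis
        by blast
    qed
    then show ?thesis
      by blast
  qed
  finally show ?thesis
    by simp
qed

lemma (in prob_space) AE_nonpos_if_prob_greater_0:
  fixes Z :: "'a \<Rightarrow> real"
  assumes [measurable]: "Z \<in> borel_measurable M"
    and null: "\<And>\<delta>. 0 < \<delta> \<Longrightarrow> prob {\<omega> \<in> space M. \<delta> < Z \<omega>} = 0"
  shows "AE \<omega> in M. Z \<omega> \<le> 0"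
proof -
  have "AE \<omega> in M. \<forall>j::nat. Z \<omega> \<le> 1 / Suc j"
  proof (subst AE_all_countable, intro allI)
    fix j :: nat
    have "{\<omega> \<in> space M. 1 / Suc j < Z \<omega>} \<in> null_sets M"
      using null[of "1 / Suc j"] by (simp add: null_sets_def emeasure_eq_measure)
    then show "AE \<omega> in M. Z \<omega> \<le> 1 / Suc j"
      by (rule AE_I') auto
  qed
  then show ?thesis
  proof (rule eventually_mono)
    fix \<omega> assume le: "\<forall>j::nat. Z \<omega> \<le> 1 / Suc j"
    show "Z \<omega> \<le> 0"
    proof (rule ccontr)
      assume "\<not> Z \<omega> \<le> 0"
      then have "0 < Z \<omega>"
        by simp
      then obtain j where "inverse (Suc j) < Z \<omega>"
        using reals_Archimedean by blast
      with le show False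
        by (auto simp: inverse_eq_divide dest: spec[of _ j])
    qed
  qed
qed

lemma (in prob_space) prob_greater_le_product_bound:
  fixes Z A B :: "'a \<Rightarrow> real"
  assumes [measurable]: "Z \<in> borel_measurable M" "B \<in> borel_measurable M"
    and dominated: "AE \<omega> in M. Z \<omega> \<le> A \<omega> * B \<omega>"
    and A: "integrable M A" "\<And>\<omega>. 0 \<le> A \<omega>" and "0 < \<delta>" "0 < N"
  shows "prob {\<omega> \<in> space M. \<delta> < Z \<omega>}
    \<le> (\<integral>\<omega>. A \<omega> \<partial>M) * (N / \<delta>) + prob {\<omega> \<in> space M. N < B \<omega>}"
proof -
  have [measurable]: "A \<in> borel_measurable M"
    using A(1) by (rule borel_measurable_integrable)
  define D where "D = {\<omega> \<in> space M. \<delta> / N \<le> A \<omega>}"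
  define E where "E = {\<omega> \<in> space M. N < B \<omega>}"
  have [measurable]: "D \<in> sets M" "E \<in> sets M"
    unfolding D_def E_def by measurable
  have "AE \<omega> in M. \<omega> \<in> {\<omega> \<in> space M. \<delta> < Z \<omega>} \<longrightarrow> \<omega> \<in> D \<union> E"
    using dominated
  proof eventually_elim
    case (elim \<omega>)
    have "\<delta> / N < A \<omega>" if "\<delta> < Z \<omega>" "B \<omega> \<le> N"
    proof -
      have "\<delta> < A \<omega> * N"
        using elim that mult_left_mono[OF \<open>B \<omega> \<le> N\<close> A(2)[of \<omega>]] by linarith
      then show ?thesis
        using \<open>0 < N\<close> by (simp add: divide_less_eq)
    qed
    then show ?case
      by (auto simp: D_def E_def not_less)
  qed
  then have "prob {\<omega> \<in> space M. \<delta> < Z \<omega>} \<le> prob (D \<union> E)"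
    by (rule finite_measure_mono_AE) simp
  also have "\<dots> \<le> prob D + prob E"
    by (rule measure_Un_le) simp_all
  also have "prob D \<le> (\<integral>\<omega>. A \<omega> \<partial>M) / (\<delta> / N)"
    unfolding D_def using A \<open>0 < \<delta>\<close> \<open>0 < N\<close>
    by (intro integral_Markov_inequality_measure[OF A(1), of "space M"]) simp_all
  finally show ?thesis
    by (simp add: E_def)
qed

lemma (in prob_space) AE_nonpos_if_dominated_vanishing_tight:
  fixes Z :: "'a \<Rightarrow> real" and A B :: "nat \<Rightarrow> 'a \<Rightarrow> real"
  assumes [measurable]: "Z \<in> borel_measurable M" "\<And>m. B m \<in> borel_measurable M"
    and dominated: "\<And>m. AE \<omega> in M. Z \<omega> \<le> A m \<omega> * B m \<omega>"
    and A: "\<And>m. integrable M (A m)" "\<And>m \<omega>. 0 \<le> A m \<omega>" "(\<lambda>m. \<integral>\<omega>. A m \<omega> \<partial>M) \<longlonglongrightarrow> 0"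
    and tight: "\<And>m N. prob {\<omega> \<in> space M. real N < B m \<omega>} \<le> t N" "t \<longlonglongrightarrow> 0"
  shows "AE \<omega> in M. Z \<omega> \<le> 0"
proof (rule AE_nonpos_if_prob_greater_0)
  fix \<delta> :: real assume "0 < \<delta>"
  have le_tail: "prob {\<omega> \<in> space M. \<delta> < Z \<omega>} \<le> t N" if "0 < N" for N
  proof (rule tendsto_le[OF trivial_limit_sequentially _ tendsto_const])
    have "(\<lambda>m. (\<integral>\<omega>. A m \<omega> \<partial>M) * (N / \<delta>) + t N) \<longlonglongrightarrow> 0 * (N / \<delta>) + t N"
      by (intro tendsto_intros A(3))
    then show "(\<lambda>m. (\<integral>\<omega>. A m \<omega> \<partial>M) * (N / \<delta>) + t N) \<longlonglongrightarrow> t N"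
      by simp
    show "\<forall>\<^sub>F m in sequentially. prob {\<omega> \<in> space M. \<delta> < Z \<omega>} \<le> (\<integral>\<omega>. A m \<omega> \<partial>M) * (N / \<delta>) + t N"
    proof (intro always_eventually allI)
      fix m
      have "prob {\<omega> \<in> space M. \<delta> < Z \<omega>}
          \<le> (\<integral>\<omega>. A m \<omega> \<partial>M) * (N / \<delta>) + prob {\<omega> \<in> space M. real N < B m \<omega>}"
        using that \<open>0 < \<delta>\<close> by (intro prob_greater_le_product_bound dominated A(1,2)) simp_all
      also have "\<dots> \<le> (\<integral>\<omega>. A m \<omega> \<partial>M) * (N / \<delta>) + t N"
        using tight(1) by (rule add_left_mono)
      finally show "prob {\<omega> \<in> space M. \<delta> < Z \<omega>} \<le> (\<integral>\<omega>. A m \<omega> \<partial>M) * (N / \<delta>) + t N" .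
    qed
  qed
  have "prob {\<omega> \<in> space M. \<delta> < Z \<omega>} \<le> 0"
  proof (rule tendsto_le[OF trivial_limit_sequentially tight(2) tendsto_const])
    show "\<forall>\<^sub>F N in sequentially. prob {\<omega> \<in> space M. \<delta> < Z \<omega>} \<le> t N"
      using le_tail by (intro eventually_sequentiallyI[of 1]) simp
  qed
  then show "prob {\<omega> \<in> space M. \<delta> < Z \<omega>} = 0"
    by (simp add: measure_le_0_iff)
qed simp

lemma (in prob_space) stationary_processes_prob_abs_diff_greater:
  fixes X Y :: "int \<Rightarrow> 'a \<Rightarrow> real"
  assumes [measurable]: "\<And>n. X n \<in> borel_measurable M" "\<And>n. Y n \<in> borel_measurable M"
    and "stationary_process M X" "stationary_process M Y"
  shows "prob {\<omega> \<in> space M. a < \<bar>Y k \<omega> - X k \<omega>\<bar>}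
    \<le> prob {\<omega> \<in> space M. a < 2 * \<bar>Y 0 \<omega>\<bar>} + prob {\<omega> \<in> space M. a < 2 * \<bar>X 0 \<omega>\<bar>}"
proof -
  have "prob {\<omega> \<in> space M. a < \<bar>Y k \<omega> - X k \<omega>\<bar>}
      \<le> prob ({\<omega> \<in> space M. a < 2 * \<bar>Y k \<omega>\<bar>} \<union> {\<omega> \<in> space M. a < 2 * \<bar>X k \<omega>\<bar>})"
    by (intro finite_measure_mono) auto
  also have "\<dots> \<le> prob {\<omega> \<in> space M. a < 2 * \<bar>Y k \<omega>\<bar>} + prob {\<omega> \<in> space M. a < 2 * \<bar>X k \<omega>\<bar>}"
    by (rule measure_Un_le) measurable
  also have "\<dots> = prob {\<omega> \<in> space M. a < 2 * \<bar>Y 0 \<omega>\<bar>} + prob {\<omega> \<in> space M. a < 2 * \<bar>X 0 \<omega>\<bar>}"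
    using stationary_process_prob_marginal[OF \<open>stationary_process M X\<close>, of "{x. a < 2 * \<bar>x\<bar>}" k]
      stationary_process_prob_marginal[OF \<open>stationary_process M Y\<close>, of "{x. a < 2 * \<bar>x\<bar>}" k]
    by simp
  finally show ?thesis .
qed

lemma (in prob_space) stationary_solutions_unique:
  fixes X Y e c :: "int \<Rightarrow> 'a \<Rightarrow> real"
  assumes [measurable]: "\<And>n. X n \<in> borel_measurable M" "\<And>n. Y n \<in> borel_measurable M"
    and X: "AE \<omega> in M. \<forall>n. X (n + 1) \<omega> = e (n + 1) \<omega> * \<bar>X n \<omega>\<bar> + c (n + 1) \<omega>"
    and Y: "AE \<omega> in M. \<forall>n. Y (n + 1) \<omega> = e (n + 1) \<omega> * \<bar>Y n \<omega>\<bar> + c (n + 1) \<omega>"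
    and stationary: "stationary_process M X" "stationary_process M Y"
    and e: "\<And>n m. integrable M (\<lambda>\<omega>. \<Prod>k<m. \<bar>e (n - int k) \<omega>\<bar>)"
      "\<And>n. (\<lambda>m. \<integral>\<omega>. (\<Prod>k<m. \<bar>e (n - int k) \<omega>\<bar>) \<partial>M) \<longlonglongrightarrow> 0"
  shows "AE \<omega> in M. \<forall>n. Y n \<omega> = X n \<omega>"
proof (subst AE_all_countable, intro allI)
  fix n
  define t where "t N = prob {\<omega> \<in> space M. real N < 2 * \<bar>Y 0 \<omega>\<bar>}
    + prob {\<omega> \<in> space M. real N < 2 * \<bar>X 0 \<omega>\<bar>}" for N :: nat
  have tight: "prob {\<omega> \<in> space M. real N < \<bar>Y (n - int m) \<omega> - X (n - int m) \<omega>\<bar>} \<le> t N" for m N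
    unfolding t_def using assms(1,2) stationary by (rule stationary_processes_prob_abs_diff_greater)
  have "t \<longlonglongrightarrow> 0 + 0"
    unfolding t_def by (intro tendsto_add tendsto_prob_tail) simp_all
  then have t_lim: "t \<longlonglongrightarrow> 0"
    by simp
  have dominated: "AE \<omega> in M. \<bar>Y n \<omega> - X n \<omega>\<bar>
      \<le> (\<Prod>k<m. \<bar>e (n - int k) \<omega>\<bar>) * \<bar>Y (n - int m) \<omega> - X (n - int m) \<omega>\<bar>" for m
    using X Y
  proof eventually_elim
    case (elim \<omega>)
    then show ?case
      by (intro recurrence_solutions_contract[where x = "\<lambda>i. X i \<omega>" and y = "\<lambda>i. Y i \<omega>"
            and e = "\<lambda>i. e i \<omega>" and c = "\<lambda>i. c i \<omega>"]) simp_all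
  qed
  have diff_meas: "(\<lambda>\<omega>. \<bar>Y (n - int m) \<omega> - X (n - int m) \<omega>\<bar>) \<in> borel_measurable M" for m
    by measurable
  have "AE \<omega> in M. \<bar>Y n \<omega> - X n \<omega>\<bar> \<le> 0"
    by (rule AE_nonpos_if_dominated_vanishing_tight
        [OF _ diff_meas dominated e(1) _ e(2) tight t_lim])
      (measurable, simp add: prod_nonneg)
  then show "AE \<omega> in M. Y n \<omega> = X n \<omega>"
    by eventually_elim simp
qed

section \<open>The cloud model\<close>

locale cloud_model = prob_space +
  fixes eps En :: "int \<Rightarrow> 'a \<Rightarrow> real"
  assumes eps_indep: "indep_vars (\<lambda>_. borel) eps UNIV"
    and eps_normal: "\<And>i. distributed M lborel (eps i) (\<lambda>x. ennreal (std_normal_density x))"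
    and En_measurable [measurable]: "\<And>i. En i \<in> borel_measurable M"
    and En_stationary: "stationary_process M En"
    and En_eps_indep: "indep_var real_paths (\<lambda>\<omega> i. En i \<omega>) real_paths (\<lambda>\<omega> i. eps i \<omega>)"
    and En_log_moment: "\<And>i. (\<integral>\<^sup>+\<omega>. ennreal (log_plus \<bar>En i \<omega>\<bar>) \<partial>M) < \<infinity>"
begin

lemma eps_measurable [measurable]: "eps i \<in> borel_measurable M"
  using eps_normal[of i] by (auto dest: distributed_measurable)

lemma eps_prod_abs:
  "integrable M (\<lambda>\<omega>. \<Prod>k<m. \<bar>eps (n - int k) \<omega>\<bar>)"
  "(\<integral>\<omega>. (\<Prod>k<m. \<bar>eps (n - int k) \<omega>\<bar>) \<partial>M) = sqrt (2 / pi) ^ m"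
proof -
  let ?I = "(\<lambda>k. n - int k) ` {..<m}"
  have inj: "inj_on (\<lambda>k. n - int k) {..<m}"
    by (auto simp: inj_on_def)
  have prod_eq: "(\<Prod>k<m. \<bar>eps (n - int k) \<omega>\<bar>) = (\<Prod>i\<in>?I. \<bar>eps i \<omega>\<bar>)" for \<omega>
    by (simp add: prod.reindex[OF inj])
  have indep: "indep_vars (\<lambda>_. borel) eps ?I"
    by (rule indep_vars_subset[OF eps_indep]) simp
  show "integrable M (\<lambda>\<omega>. \<Prod>k<m. \<bar>eps (n - int k) \<omega>\<bar>)"
    unfolding prod_eq using std_normal_abs_moment[OF eps_normal]
    by (intro indep_vars_prod_abs[OF indep]) auto
  show "(\<integral>\<omega>. (\<Prod>k<m. \<bar>eps (n - int k) \<omega>\<bar>) \<partial>M) = sqrt (2 / pi) ^ m"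
    unfolding prod_eq using std_normal_abs_moment[OF eps_normal] card_image[OF inj]
    by (subst indep_vars_prod_abs[OF indep]) auto
qed

lemma AE_convergent_backward_iter:
  "AE \<omega> in M. \<forall>n. convergent (\<lambda>m. backward_iter (\<lambda>i. eps i \<omega>) (\<lambda>i. En i \<omega>) m n)"
proof (subst AE_all_countable, intro allI)
  fix n
  \<comment> \<open>The rates 9/10 and 21/20 only need to exceed sqrt(2/pi) and 1, with product below 1.\<close>
  have "AE \<omega> in M. eventually (\<lambda>m. (\<Prod>k<m. \<bar>eps (n - int k) \<omega>\<bar>) < (9 / 10) ^ m) sequentially"
    using eps_prod_abs sqrt_2_div_pi_less
    by (intro AE_eventually_less_power) (auto intro: prod_nonneg)
  moreover have "AE \<omega> in M. eventually (\<lambda>m. \<bar>En (n - int m) \<omega>\<bar> < (21 / 20) ^ m) sequentially"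
    using En_stationary En_log_moment by (intro stationary_process_AE_eventually_less_power) auto
  ultimately show "AE \<omega> in M. convergent (\<lambda>m. backward_iter (\<lambda>i. eps i \<omega>) (\<lambda>i. En i \<omega>) m n)"
  proof eventually_elim
    case (elim \<omega>)
    then have "eventually (\<lambda>m. norm ((\<Prod>k<m. \<bar>eps (n - int k) \<omega>\<bar>) * \<bar>En (n - int m) \<omega>\<bar>)
        \<le> (189 / 200) ^ m) sequentially"
    proof eventually_elim
      case (elim m)
      then have "(\<Prod>k<m. \<bar>eps (n - int k) \<omega>\<bar>) * \<bar>En (n - int m) \<omega>\<bar> \<le> (9 / 10) ^ m * (21 / 20) ^ m"
        by (intro mult_mono) (auto intro: prod_nonneg)
      then show ?case
        by (simp add: abs_mult prod_nonneg power_mult_distrib[symmetric])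
    qed
    then have "summable (\<lambda>m. (\<Prod>k<m. \<bar>eps (n - int k) \<omega>\<bar>) * \<bar>En (n - int m) \<omega>\<bar>)"
      by (rule summable_comparison_test_ev) (simp add: summable_geometric)
    then show ?case
      by (rule convergent_backward_iter)
  qed
qed

definition solution :: "int \<Rightarrow> 'a \<Rightarrow> real" where
  "solution n \<omega> = backward_limit (\<lambda>i. eps i \<omega>) (\<lambda>i. En i \<omega>) n"

lemma solution_measurable: "solution n \<in> borel_measurable M"
proof -
  have "(\<lambda>\<omega>. (\<lambda>i. En i \<omega>, \<lambda>i. eps i \<omega>)) \<in> measurable M (real_paths \<Otimes>\<^sub>M real_paths)"
    by (intro measurable_Pair measurable_process_path) simp_all
  from measurable_compose[OF this measurable_backward_limit] show ?thesis
    by (simp add: solution_def[abs_def])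
qed

lemma solution_recurrence:
  "AE \<omega> in M. \<forall>n. solution (n + 1) \<omega> = eps (n + 1) \<omega> * \<bar>solution n \<omega>\<bar> + En (n + 1) \<omega>"
  using AE_convergent_backward_iter
proof eventually_elim
  case (elim \<omega>)
  show ?case
  proof
    fix n
    have "convergent (\<lambda>m. backward_iter (\<lambda>i. eps i \<omega>) (\<lambda>i. En i \<omega>) m (n + 1 - 1))"
      using elim by simp
    from backward_limit_recurrence[OF this]
    show "solution (n + 1) \<omega> = eps (n + 1) \<omega> * \<bar>solution n \<omega>\<bar> + En (n + 1) \<omega>"
      by (simp add: solution_def)
  qed
qed

lemma solution_stationary: "stationary_process M solution"
  unfolding solution_def[abs_def]
proof (rule stationary_process_backward_limit)
  have "distr M real_paths (\<lambda>\<omega> i. eps (i + k) \<omega>) = distr M real_paths (\<lambda>\<omega> i. eps i \<omega>)" for k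
  proof (rule iid_distr_path_shift[OF eps_indep])
    have "distr M borel (eps i) = distr M lborel (eps i)" for i
      by (rule distr_cong) simp_all
    then show "distr M borel (eps i) = distr M borel (eps 0)" for i
      by (simp add: distributed_distr_eq_density[OF eps_normal])
  qed
  with En_eps_indep stationary_process_distr_path_shift[OF En_stationary En_measurable]
  show "distr M (real_paths \<Otimes>\<^sub>M real_paths) (\<lambda>\<omega>. (\<lambda>i. En (i + k) \<omega>, \<lambda>i. eps (i + k) \<omega>))
      = distr M (real_paths \<Otimes>\<^sub>M real_paths) (\<lambda>\<omega>. (\<lambda>i. En i \<omega>, \<lambda>i. eps i \<omega>))" for k
    by (rule indep_distr_pair_path_shift)
qed simp_all

lemma solution_unique:
  assumes "\<And>n. Y n \<in> borel_measurable M"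
    and "AE \<omega> in M. \<forall>n. Y (n + 1) \<omega> = eps (n + 1) \<omega> * \<bar>Y n \<omega>\<bar> + En (n + 1) \<omega>"
    and "stationary_process M Y"
  shows "AE \<omega> in M. \<forall>n. Y n \<omega> = solution n \<omega>"
proof (rule stationary_solutions_unique[OF solution_measurable assms(1) solution_recurrence assms(2)
      solution_stationary assms(3) eps_prod_abs(1)])
  show "(\<lambda>m. \<integral>\<omega>. (\<Prod>k<m. \<bar>eps (n - int k) \<omega>\<bar>) \<partial>M) \<longlonglongrightarrow> 0" for n
    unfolding eps_prod_abs(2) by (rule LIMSEQ_power_zero) (use pi_gt3 in simp)
qed

end

theorem theorem3:
  fixes M :: "'a measure"
    and eps :: "int \<Rightarrow> 'a \<Rightarrow> real"
    and En :: "int \<Rightarrow> 'a \<Rightarrow> real"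
  assumes "prob_space M"
    and eps_indep: "prob_space.indep_vars M (\<lambda>_. borel) eps UNIV"
    and eps_normal: "\<And>i. distributed M lborel (eps i) (\<lambda>x. ennreal (std_normal_density x))"
    and En_meas: "\<And>i. En i \<in> borel_measurable M"
    and A1_stationary: "stationary_process M En"
    and A1_ergodic: "ergodic_process M En"
    and A2: "prob_space.indep_var M
               (PiM UNIV (\<lambda>_. borel)) (\<lambda>\<omega> i. En i \<omega>)
               (PiM UNIV (\<lambda>_. borel)) (\<lambda>\<omega> i. eps i \<omega>)"
    and A3: "\<And>i. (\<integral>\<^sup>+ \<omega>. ennreal (log_plus \<bar>En i \<omega>\<bar>) \<partial>M) < \<infinity>"
  shows "\<exists>X :: int \<Rightarrow> 'a \<Rightarrow> real.
           (\<forall>n. X n \<in> borel_measurable M) \<and>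
           (AE \<omega> in M. \<forall>n. X (n + 1) \<omega> = eps (n + 1) \<omega> * \<bar>X n \<omega>\<bar> + En (n + 1) \<omega>) \<and>
           stationary_process M X \<and>
           (\<forall>Y :: int \<Rightarrow> 'a \<Rightarrow> real.
              (\<forall>n. Y n \<in> borel_measurable M) \<and>
              (AE \<omega> in M. \<forall>n. Y (n + 1) \<omega> = eps (n + 1) \<omega> * \<bar>Y n \<omega>\<bar> + En (n + 1) \<omega>) \<and>
              stationary_process M Y
              \<longrightarrow> (AE \<omega> in M. \<forall>n. Y n \<omega> = X n \<omega>))"
proof -
  interpret cloud_model M eps En
    using assms by (simp add: cloud_model_def cloud_model_axioms_def)
  show ?thesis
  proof (intro exI[of _ solution] conjI allI impI)
    fix Y :: "int \<Rightarrow> 'a \<Rightarrow> real"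
    assume "(\<forall>n. Y n \<in> borel_measurable M) \<and>
      (AE \<omega> in M. \<forall>n. Y (n + 1) \<omega> = eps (n + 1) \<omega> * \<bar>Y n \<omega>\<bar> + En (n + 1) \<omega>) \<and>
      stationary_process M Y"
    then show "AE \<omega> in M. \<forall>n. Y n \<omega> = solution n \<omega>"
      by (intro solution_unique) auto
  qed (simp_all add: solution_measurable solution_recurrence solution_stationary)
qed

end
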